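(* Let $x:[0,1]\to\mathbb{R}$ be càdlàg and $0\le s<t\le1$. Define $\beta=\sup_{s\le u<v<w\le t}H(x(u),x(v),x(w))$. If $\eta>2\beta$, then \[N_\eta(x;[s,t])\le\frac{|x(t)-x(s)|+\beta}{\eta-\beta}.\]
   Context: $H(a,b,c)=(a\wedge c-a\wedge c\wedge b)\vee(a\vee c\vee b-a\vee c)$ is the distance from $b$ to the interval with endpoints $a$ and $c$. For $\eta>0$, $N_\eta(x;[s,t])$ (the number of $\eta$-oscillations of $x$ in $[s,t]$) is the largest integer $N$ for which there exist points $s\le t_1<t_2\le t_3<t_4\le\dots\le t_{2N-1}<t_{2N}\le t$ with $|x(t_{2k})-x(t_{2k-1})|>\eta$ for all $k=1,\dots,N$ (and $0$ if there are no such points). *)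

theory Defs
  imports "HOL-Analysis.Analysis" "HOL-Library.Extended_Nat"
begin

definition cadlag01 :: "(real \<Rightarrow> real) \<Rightarrow> bool" where
  "cadlag01 x \<longleftrightarrow>
     (\<forall>t\<in>{0..<1}. (x \<longlongrightarrow> x t) (at_right t)) \<and>
     (\<forall>t\<in>{0<..1}. \<exists>l. (x \<longlongrightarrow> l) (at_left t))"

text \<open>Distance from b to the interval with endpoints a and c.\<close>
definition H :: "real \<Rightarrow> real \<Rightarrow> real \<Rightarrow> real" where
  "H a b c = max (min a c - min (min a c) b) (max (max a c) b - max a c)"

text \<open>Admissible numbers of eta-oscillations: N such that there are points
  s \<le> a 0 < b 0 \<le> a 1 < b 1 \<le> ... \<le> a (N-1) < b (N-1) \<le> t with
  |x(b k) - x(a k)| > eta  (a k = t_{2k+1}, b k = t_{2k+2}).\<close>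
definition osc_counts :: "(real \<Rightarrow> real) \<Rightarrow> real \<Rightarrow> real \<Rightarrow> real \<Rightarrow> nat set" where
  "osc_counts x \<eta> s t = {N. \<exists>a b :: nat \<Rightarrow> real.
      (\<forall>k<N. s \<le> a k \<and> a k < b k \<and> b k \<le> t \<and> \<bar>x (b k) - x (a k)\<bar> > \<eta>) \<and>
      (\<forall>k. Suc k < N \<longrightarrow> b k \<le> a (Suc k))}"

text \<open>N_eta(x;[s,t]) as the supremum (in enat, so it may a priori be infinite)
  of the admissible counts; it is the largest such integer whenever that exists.\<close>
definition N_osc :: "(real \<Rightarrow> real) \<Rightarrow> real \<Rightarrow> real \<Rightarrow> real \<Rightarrow> enat" where
  "N_osc x \<eta> s t = Sup (enat ` osc_counts x \<eta> s t)"

end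

theory Submission
  imports Defs
begin

text \<open>
  A cadlag path is bounded, so \<open>\<beta>\<close> bounds \<open>H\<close> on all ordered triples of \<open>[s,t]\<close>.
  Because \<open>\<eta> > 2\<beta>\<close>, two consecutive \<open>\<eta>\<close>-oscillations cannot go in opposite directions,
  so after replacing \<open>x\<close> by \<open>-x\<close> all of them are rises. After a rise exceeding \<open>\<beta>\<close>
  the path never drops more than \<open>\<beta>\<close> below its top, so each further oscillation gains at
  least \<open>\<eta> - \<beta>\<close>, and the two ends \<open>s\<close> and \<open>t\<close> cost at most \<open>\<beta>\<close> each:
  \<open>x(t) - x(s) \<ge> N\<eta> - (N+1)\<beta>\<close>.
\<close>

lemma cadlag01_eventually_bounded:
  assumes "cadlag01 x" and "t \<in> {0..1}"
  shows "\<exists>B. \<forall>\<^sub>F y in at t. y \<in> {0..1} \<longrightarrow> \<bar>x y\<bar> \<le> B"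
proof -
  have "\<exists>B. \<forall>\<^sub>F y in at_right t. y \<in> {0..1} \<longrightarrow> \<bar>x y\<bar> \<le> B"
  proof (cases "t < 1")
    case True
    with assms have "(x \<longlongrightarrow> x t) (at_right t)" unfolding cadlag01_def by auto
    then have "\<forall>\<^sub>F y in at_right t. dist (x y) (x t) < 1" by (rule tendstoD) simp
    then have "\<forall>\<^sub>F y in at_right t. \<bar>x y\<bar> \<le> \<bar>x t\<bar> + 1"
      by eventually_elim (auto simp: dist_real_def)
    then show ?thesis by (auto elim: eventually_mono)
  next
    case False
    with assms have "\<forall>\<^sub>F y in at_right t. y \<notin> {0..1}"
      using eventually_at_right_less[of t] by (auto elim: eventually_mono)
    then show ?thesis by (auto elim: eventually_mono)
  qed
  moreover have "\<exists>B. \<forall>\<^sub>F y in at_left t. y \<in> {0..1} \<longrightarrow> \<bar>x y\<bar> \<le> B"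
  proof (cases "0 < t")
    case True
    with assms obtain l where "(x \<longlongrightarrow> l) (at_left t)" unfolding cadlag01_def by force
    then have "\<forall>\<^sub>F y in at_left t. dist (x y) l < 1" by (rule tendstoD) simp
    then have "\<forall>\<^sub>F y in at_left t. \<bar>x y\<bar> \<le> \<bar>l\<bar> + 1"
      by eventually_elim (auto simp: dist_real_def)
    then show ?thesis by (auto elim: eventually_mono)
  next
    case False
    with assms have "\<forall>\<^sub>F y in at_left t. y \<notin> {0..1}"
      by (auto simp: eventually_at_filter)
    then show ?thesis by (auto elim: eventually_mono)
  qed
  ultimately obtain B\<^sub>r B\<^sub>l where
      "\<forall>\<^sub>F y in at_right t. y \<in> {0..1} \<longrightarrow> \<bar>x y\<bar> \<le> B\<^sub>r"
      "\<forall>\<^sub>F y in at_left t. y \<in> {0..1} \<longrightarrow> \<bar>x y\<bar> \<le> B\<^sub>l"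
    by blast
  then have "\<forall>\<^sub>F y in at t. y \<in> {0..1} \<longrightarrow> \<bar>x y\<bar> \<le> max B\<^sub>l B\<^sub>r"
    unfolding eventually_at_split by (auto elim: eventually_mono)
  then show ?thesis ..
qed

lemma cadlag01_bounded:
  assumes "cadlag01 x"
  obtains B where "\<And>y. y \<in> {0..1} \<Longrightarrow> \<bar>x y\<bar> \<le> B"
proof -
  have "\<exists>d B. d > 0 \<and> (\<forall>y\<in>{0..1}. dist y t < d \<longrightarrow> \<bar>x y\<bar> \<le> B)" if t: "t \<in> {0..1}" for t
  proof -
    obtain B where "\<forall>\<^sub>F y in at t. y \<in> {0..1} \<longrightarrow> \<bar>x y\<bar> \<le> B"
      using cadlag01_eventually_bounded[OF assms t] by blast
    then obtain d where "d > 0" "\<forall>y. y \<noteq> t \<and> dist y t < d \<longrightarrow> y \<in> {0..1} \<longrightarrow> \<bar>x y\<bar> \<le> B"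
      unfolding eventually_at by auto
    then show ?thesis by (intro exI[of _ d] exI[of _ "max B \<bar>x t\<bar>"]) force
  qed
  then obtain d B where dB: "\<And>t. t \<in> {0..1} \<Longrightarrow> d t > 0 \<and> (\<forall>y\<in>{0..1}. dist y t < d t \<longrightarrow> \<bar>x y\<bar> \<le> B t)"
    by metis
  then have "{0..1} \<subseteq> (\<Union>t\<in>{0..1}. ball t (d t))"
    by force
  then obtain C where C: "C \<subseteq> {0..1}" "finite C" "{0..1} \<subseteq> (\<Union>t\<in>C. ball t (d t))"
    using compactE_image[OF compact_Icc, of "{0..1}" "\<lambda>t. ball t (d t)" 0 1] by auto
  show ?thesis
  proof
    fix y :: real assume y: "y \<in> {0..1}"
    with C obtain t where "t \<in> C" "dist t y < d t" by auto
    with C dB y have "\<bar>x y\<bar> \<le> B t" by (auto simp: dist_commute)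
    also have "B t \<le> Max (B ` C)" using C \<open>t \<in> C\<close> by auto
    finally show "\<bar>x y\<bar> \<le> Max (B ` C)" .
  qed
qed

lemma H_nonneg: "0 \<le> H a b c"
  by (simp add: H_def)

lemma H_left_eq: "H a a c = 0"
  by (simp add: H_def max_def min_def)

lemma H_right_eq: "H a c c = 0"
  by (simp add: H_def max_def min_def)

lemma H_uminus: "H (- a) (- b) (- c) = H a b c"
  by (simp add: H_def max_def min_def)

lemma H_le_twice_bound: "\<bar>a\<bar> \<le> B \<Longrightarrow> \<bar>b\<bar> \<le> B \<Longrightarrow> \<bar>c\<bar> \<le> B \<Longrightarrow> H a b c \<le> 2 * B"
  by (auto simp: H_def max_def min_def abs_le_iff)

lemma H_le_after_rise: "H a b c \<le> \<beta> \<Longrightarrow> a + \<beta> < b \<Longrightarrow> b - \<beta> \<le> c"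
  by (auto simp: H_def max_def min_def split: if_splits)

lemma H_le_before_rise: "H a b c \<le> \<beta> \<Longrightarrow> b + \<beta> < c \<Longrightarrow> a - \<beta> \<le> b"
  by (auto simp: H_def max_def min_def split: if_splits)

lemma H_le_no_rise_then_fall:
  assumes "H p q w \<le> \<beta>" "H q r w \<le> \<beta>" "2 * \<beta> < \<eta>" "p + \<eta> < q" "w + \<eta> < r"
  shows False
  using assms by (auto simp: H_def max_def min_def split: if_splits)

lemma H_le_no_fall_then_rise:
  assumes "H p q w \<le> \<beta>" "H q r w \<le> \<beta>" "2 * \<beta> < \<eta>" "q + \<eta> < p" "r + \<eta> < w"
  shows False
  using assms by (auto simp: H_def max_def min_def split: if_splits)

locale H_bounded =
  fixes x :: "real \<Rightarrow> real" and s t \<beta> :: real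
  assumes le_st: "s \<le> t"
    and H_le: "s \<le> u \<Longrightarrow> u \<le> v \<Longrightarrow> v \<le> w \<Longrightarrow> w \<le> t \<Longrightarrow> H (x u) (x v) (x w) \<le> \<beta>"
begin

lemma nonneg: "0 \<le> \<beta>"
  using H_le[of s s s] le_st by (simp add: H_left_eq)

lemma uminus: "H_bounded (\<lambda>z. - x z) s t \<beta>"
  using le_st H_le by unfold_locales (simp_all add: H_uminus)

context
  fixes a b :: "nat \<Rightarrow> real" and N :: nat
  assumes inside: "\<forall>k<N. s \<le> a k \<and> a k < b k \<and> b k \<le> t"
    and ordered: "\<forall>k. Suc k < N \<longrightarrow> b k \<le> a (Suc k)"
begin

lemma consecutive_pairs:
  "Suc k < N \<Longrightarrow> s \<le> a k \<and> a k < b k \<and> b k \<le> a (Suc k) \<and> a (Suc k) < b (Suc k) \<and> b (Suc k) \<le> t"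
  using inside ordered by (metis Suc_lessD)

lemma oscillations_same_direction:
  assumes "2 * \<beta> < \<eta>" and large: "\<forall>k<N. \<eta> < \<bar>x (b k) - x (a k)\<bar>" and "k < N"
  shows "x (a k) < x (b k) \<longleftrightarrow> x (a 0) < x (b 0)"
  using \<open>k < N\<close>
proof (induction k)
  case (Suc k)
  then have "s \<le> a k" "a k < b k" "b k \<le> a (Suc k)" "a (Suc k) < b (Suc k)" "b (Suc k) \<le> t"
    using consecutive_pairs by blast+
  then have H\<^sub>1: "H (x (a k)) (x (b k)) (x (b (Suc k))) \<le> \<beta>"
    and H\<^sub>2: "H (x (b k)) (x (a (Suc k))) (x (b (Suc k))) \<le> \<beta>"
    by (intro H_le; linarith)+
  note no_switch = H_le_no_rise_then_fall[OF H\<^sub>1 H\<^sub>2 \<open>2 * \<beta> < \<eta>\<close>]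
    H_le_no_fall_then_rise[OF H\<^sub>1 H\<^sub>2 \<open>2 * \<beta> < \<eta>\<close>]
  have "\<eta> < \<bar>x (b k) - x (a k)\<bar>" "\<eta> < \<bar>x (b (Suc k)) - x (a (Suc k))\<bar>"
    using large Suc.prems by auto
  with no_switch nonneg \<open>2 * \<beta> < \<eta>\<close>
  have "x (a (Suc k)) < x (b (Suc k)) \<longleftrightarrow> x (a k) < x (b k)"
    by (auto simp: abs_if split: if_splits)
  with Suc show ?case by simp
qed simp

lemma rising_oscillations_count:
  assumes "\<beta> < \<eta>" and rise: "\<forall>k<N. x (a k) + \<eta> < x (b k)" and "0 < N"
  shows "real N * (\<eta> - \<beta>) \<le> x t - x s + \<beta>"
proof -
  have rise_\<beta>: "x (a k) + \<beta> < x (b k)" if "k < N" for k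
    using rise that \<open>\<beta> < \<eta>\<close> by force
  have partial: "real (Suc k) * \<eta> - real k * \<beta> \<le> x (b k) - x (a 0)" if "k < N" for k
    using that
  proof (induction k)
    case (Suc k)
    then have "s \<le> a k" "a k < b k" "b k \<le> a (Suc k)" "a (Suc k) < b (Suc k)" "b (Suc k) \<le> t"
      using consecutive_pairs by blast+
    then have "H (x (a k)) (x (b k)) (x (a (Suc k))) \<le> \<beta>"
      by (intro H_le; linarith)
    with rise_\<beta> Suc.prems have "x (b k) - \<beta> \<le> x (a (Suc k))"
      by (intro H_le_after_rise) auto
    moreover have "x (a (Suc k)) + \<eta> < x (b (Suc k))"
      using rise Suc.prems by blast
    ultimately show ?case
      using Suc by (simp add: algebra_simps)
  qed (use rise \<open>0 < N\<close> in force)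
  define m where "m = N - 1"
  have "m < N" "N = Suc m" using \<open>0 < N\<close> by (auto simp: m_def)
  then have "H (x (a m)) (x (b m)) (x t) \<le> \<beta>" "H (x s) (x (a 0)) (x (b 0)) \<le> \<beta>"
    using inside by (intro H_le; force)+
  then have "x (b m) - \<beta> \<le> x t" "x s - \<beta> \<le> x (a 0)"
    using rise_\<beta> \<open>m < N\<close> \<open>0 < N\<close> by (auto intro: H_le_after_rise H_le_before_rise)
  with partial[OF \<open>m < N\<close>] \<open>N = Suc m\<close> show ?thesis
    by (simp add: algebra_simps)
qed

end

lemma oscillation_count_bound:
  assumes "2 * \<beta> < \<eta>" and "N \<in> osc_counts x \<eta> s t"
  shows "real N * (\<eta> - \<beta>) \<le> \<bar>x t - x s\<bar> + \<beta>"
proof (cases "N = 0")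
  case True
  then show ?thesis using nonneg by simp
next
  case False
  from assms(2) obtain a b where
      inside: "\<forall>k<N. s \<le> a k \<and> a k < b k \<and> b k \<le> t"
      and ordered: "\<forall>k. Suc k < N \<longrightarrow> b k \<le> a (Suc k)"
      and large: "\<forall>k<N. \<eta> < \<bar>x (b k) - x (a k)\<bar>"
    unfolding osc_counts_def by blast
  have "\<beta> < \<eta>" using assms(1) nonneg by linarith
  interpret neg: H_bounded "\<lambda>z. - x z" s t \<beta> by (rule uminus)
  note same = oscillations_same_direction[OF inside ordered assms(1) large]
  show ?thesis
  proof (cases "x (a 0) < x (b 0)")
    case True
    with same large have "\<forall>k<N. x (a k) + \<eta> < x (b k)" by fastforce
    from rising_oscillations_count[OF inside ordered \<open>\<beta> < \<eta>\<close> this] \<open>N \<noteq> 0\<close> show ?thesis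
      by simp
  next
    case False
    with same large have "\<forall>k<N. - x (a k) + \<eta> < - x (b k)" by fastforce
    from neg.rising_oscillations_count[OF inside ordered \<open>\<beta> < \<eta>\<close> this] \<open>N \<noteq> 0\<close> show ?thesis
      by simp
  qed
qed

end

text \<open>Boundedness of a cadlag path is what makes the supremum an actual upper bound:
  the real \<open>Sup\<close> of a set that is not bounded above is an unspecified value.\<close>

lemma H_bounded_SUP_triples:
  assumes "cadlag01 x" and "0 \<le> s" "s < t" "t \<le> 1"
  shows "H_bounded x s t
           (SUP (u, v, w) \<in> {(u, v, w). s \<le> u \<and> u < v \<and> v < w \<and> w \<le> t}. H (x u) (x v) (x w))"
    (is "H_bounded x s t (Sup (?f ` ?T))")
proof -
  obtain B where B: "\<And>y. y \<in> {0..1} \<Longrightarrow> \<bar>x y\<bar> \<le> B"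
    using cadlag01_bounded[OF assms(1)] by blast
  have "bdd_above (?f ` ?T)"
  proof (rule bdd_aboveI)
    fix z assume "z \<in> ?f ` ?T"
    then obtain u v w where "z = H (x u) (x v) (x w)" "s \<le> u" "u < v" "v < w" "w \<le> t"
      by auto
    with assms show "z \<le> 2 * B"
      by (simp add: B H_le_twice_bound)
  qed
  have strict: "H (x u) (x v) (x w) \<le> Sup (?f ` ?T)"
    if "s \<le> u" "u < v" "v < w" "w \<le> t" for u v w
  proof -
    have "(u, v, w) \<in> ?T" using that by simp
    from cSUP_upper[OF this \<open>bdd_above (?f ` ?T)\<close>] show ?thesis by simp
  qed
  have "0 \<le> H (x s) (x ((s + t) / 2)) (x t)" by (rule H_nonneg)
  also have "\<dots> \<le> Sup (?f ` ?T)" using \<open>s < t\<close> by (intro strict) auto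
  finally have "0 \<le> Sup (?f ` ?T)" .
  show ?thesis
  proof
    fix u v w assume "s \<le> u" "u \<le> v" "v \<le> w" "w \<le> t"
    then consider "u = v" | "v = w" | "u < v" "v < w" by fastforce
    then show "H (x u) (x v) (x w) \<le> Sup (?f ` ?T)"
    proof cases
      case 3
      with strict \<open>s \<le> u\<close> \<open>w \<le> t\<close> show ?thesis by blast
    qed (use \<open>0 \<le> Sup (?f ` ?T)\<close> in \<open>simp_all add: H_left_eq H_right_eq\<close>)
  qed (use \<open>s < t\<close> in simp)
qed

lemma N_osc_le:
  assumes "\<And>N. N \<in> osc_counts x \<eta> s t \<Longrightarrow> real N \<le> M"
  shows "N_osc x \<eta> s t \<noteq> \<infinity> \<and> real (the_enat (N_osc x \<eta> s t)) \<le> M"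
proof -
  let ?S = "osc_counts x \<eta> s t"
  have "?S \<subseteq> {..nat \<lceil>M\<rceil>}"
    using assms by (force simp: le_nat_iff le_ceiling_iff)
  then have "finite ?S" by (rule finite_subset) simp
  moreover have "0 \<in> ?S" unfolding osc_counts_def by auto
  ultimately have "Max ?S \<in> ?S" and "N_osc x \<eta> s t = enat (Max ?S)"
    unfolding N_osc_def Sup_enat_def
    by (auto simp: mono_Max_commute[symmetric] mono_def intro!: Max_in)
  with assms show ?thesis by simp
qed

theorem lemma5:
  fixes x :: "real \<Rightarrow> real" and s t \<eta> \<beta> :: real
  assumes "cadlag01 x"
    and "0 \<le> s" and "s < t" and "t \<le> 1"
    and "\<beta> = (SUP (u, v, w) \<in> {(u, v, w). s \<le> u \<and> u < v \<and> v < w \<and> w \<le> t}.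
                 H (x u) (x v) (x w))"
    and "\<eta> > 2 * \<beta>"
  shows "N_osc x \<eta> s t \<noteq> \<infinity> \<and>
         real (the_enat (N_osc x \<eta> s t)) \<le> (\<bar>x t - x s\<bar> + \<beta>) / (\<eta> - \<beta>)"
proof (rule N_osc_le)
  interpret H_bounded x s t \<beta>
    unfolding assms(5) using H_bounded_SUP_triples[OF assms(1-4)] .
  have "0 < \<eta> - \<beta>" using assms(6) nonneg by linarith
  fix N assume "N \<in> osc_counts x \<eta> s t"
  with oscillation_count_bound[OF assms(6)] \<open>0 < \<eta> - \<beta>\<close>
  show "real N \<le> (\<bar>x t - x s\<bar> + \<beta>) / (\<eta> - \<beta>)"
    by (simp add: pos_le_divide_eq)
qed

end
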